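(* For every $\lambda\ge0$ the sequence $\big(\mathbb{E}[e^{-\lambda Z_n}]\big)_{n\ge1}$ is bounded. Moreover, \[ \mathbb{E}[e^{-Z_n}]-1\sim-\frac{\log n}{2n}\quad\text{as } n\to\infty, \] meaning that the ratio of the two sides tends to $1$.
   Context: $Z_n=\frac{T_n}{n}-\log n$, where $T_n=\sum_{i=1}^n\tau_i^n$ with $\tau_1^n,\dots,\tau_n^n$ independent and $\tau_i^n$ geometric on $\{1,2,\dots\}$ with parameter $\frac{n-i+1}{n}$; equivalently $T_n$ is the coupon collector's completion time for $n$ coupons. *)

theory Defs
  imports "HOL-Probability.Probability"
begin

text \<open>Geometric distribution on {1,2,...} with success parameter p (0 < p \<le> 1):
  P(X = k) = (1-p)^(k-1) p for k \<ge> 1. The library geometric_pmf lives on {0,1,...}.\<close>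
definition geom1_pmf :: "real \<Rightarrow> nat pmf" where
  "geom1_pmf p = map_pmf Suc (geometric_pmf p)"

fun indep_sum_pmf :: "nat pmf list \<Rightarrow> nat pmf" where
  "indep_sum_pmf [] = return_pmf 0"
| "indep_sum_pmf (p # ps) = bind_pmf p (\<lambda>x. bind_pmf (indep_sum_pmf ps) (\<lambda>y. return_pmf (x + y)))"

definition coupon_pmf :: "nat \<Rightarrow> nat pmf" where
  "coupon_pmf n = indep_sum_pmf
     (map (\<lambda>i. geom1_pmf ((real n - real i + 1) / real n)) [1..<n+1])"

definition Z :: "nat \<Rightarrow> nat \<Rightarrow> real" where
  "Z n t = real t / real n - ln (real n)"

definition laplace_Z :: "real \<Rightarrow> nat \<Rightarrow> real" where
  "laplace_Z l n = measure_pmf.expectation (coupon_pmf n) (\<lambda>t. exp (- l * Z n t))"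

end

theory Submission
  imports Defs "HOL-Real_Asymp.Real_Asymp"
begin

(* T_n is a sum of independent geometric variables, so its generating function is a product;
   at s = exp (-l/n) it gives E[exp (-l Z_n)] = n^l * prod_{k=1..n} k / (k + a) with
   a = n (exp (l/n) - 1) >= l.  Replacing a by l only increases the product, and
   n^l * prod_{k=1..n} k / (k + l) tends to Gamma (l + 1) (Gauss's product formula), which gives
   boundedness.  For l = 1 we have a = 1 + e with e ~ 1/(2n), and the product telescopes to
   E[exp (-Z_n)] = n/(n+1) * exp (-S) with S = sum_{k=1..n} ln (1 + e/(k+1)) = e ln n + O(e);
   hence 1 - E[exp (-Z_n)] = S + O(1/n + S^2) ~ ln n / (2n). *)

lemma nn_integral_power_indep_sum_pmf:
  fixes s :: real
  assumes "0 \<le> s"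
  shows "(\<integral>\<^sup>+t. ennreal (s ^ t) \<partial>indep_sum_pmf ps) = (\<Prod>p\<leftarrow>ps. \<integral>\<^sup>+t. ennreal (s ^ t) \<partial>p)"
proof (induction ps)
  case Nil
  then show ?case by simp
next
  case (Cons p ps)
  have "(\<integral>\<^sup>+t. ennreal (s ^ t) \<partial>indep_sum_pmf (p # ps))
      = (\<integral>\<^sup>+x. ennreal (s ^ x) * (\<integral>\<^sup>+y. ennreal (s ^ y) \<partial>indep_sum_pmf ps) \<partial>p)"
    using assms by (simp add: power_add ennreal_mult nn_integral_cmult)
  also have "\<dots> = (\<integral>\<^sup>+x. ennreal (s ^ x) \<partial>p) * (\<integral>\<^sup>+y. ennreal (s ^ y) \<partial>indep_sum_pmf ps)"
    by (simp add: nn_integral_multc)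
  finally show ?case
    using Cons.IH by simp
qed

lemma nn_integral_power_geom1_pmf:
  fixes p s :: real
  assumes p: "0 < p" "p \<le> 1" and s: "0 \<le> s" "s \<le> 1"
  shows "(\<integral>\<^sup>+t. ennreal (s ^ t) \<partial>geom1_pmf p) = ennreal (p * s / (1 - (1 - p) * s))"
proof -
  have "norm ((1 - p) * s) < 1"
    using p s mult_left_le[of s "1 - p"] by simp
  then have "(\<lambda>k. (p * s) * ((1 - p) * s) ^ k) sums ((p * s) * (1 / (1 - (1 - p) * s)))"
    by (intro sums_mult geometric_sums)
  then have sums: "(\<lambda>k. (1 - p) ^ k * p * s ^ Suc k) sums (p * s / (1 - (1 - p) * s))"
    by (simp add: power_mult_distrib mult_ac)
  have "(\<integral>\<^sup>+t. ennreal (s ^ t) \<partial>geom1_pmf p) = (\<integral>\<^sup>+k. ennreal (s ^ Suc k) \<partial>geometric_pmf p)"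
    by (simp add: geom1_pmf_def nn_integral_map_pmf)
  also have "\<dots> = (\<Sum>k. ennreal ((1 - p) ^ k * p * s ^ Suc k))"
    using p s by (simp add: nn_integral_measure_pmf ennreal_mult'' nn_integral_count_space_nat
        del: power_Suc)
  also have "\<dots> = ennreal (p * s / (1 - (1 - p) * s))"
    using sums p s by (intro suminf_ennreal_eq) auto
  finally show ?thesis .
qed

lemma geometric_pgf_at_ratio:
  fixes k n s :: real
  assumes "0 < s" "s \<le> 1" "0 < k" "k \<le> n"
  shows "k / n * s / (1 - (1 - k / n) * s) = k / (k + n * (1 / s - 1))"
proof -
  have "0 < k * s + n * (1 - s)"
    using assms by (intro add_pos_nonneg) auto
  moreover have "k + n * (1 / s - 1) = (k * s + n * (1 - s)) / s"
    using assms by (simp add: field_simps)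
  ultimately show ?thesis
    using assms by (simp add: field_simps)
qed

lemma expectation_power_coupon_pmf:
  assumes s: "0 < s" "s \<le> 1"
  shows "measure_pmf.expectation (coupon_pmf n) (\<lambda>t. s ^ t)
    = (\<Prod>k=1..n. real k / (real k + real n * (1 / s - 1)))"
proof -
  have factor_nonneg: "0 \<le> real k / (real k + real n * (1 / s - 1))" for k
    using s by simp
  have "(\<integral>\<^sup>+t. ennreal (s ^ t) \<partial>coupon_pmf n)
      = (\<Prod>i=1..n. \<integral>\<^sup>+t. ennreal (s ^ t) \<partial>geom1_pmf ((real n - real i + 1) / real n))"
    using s prod.distinct_set_conv_list[of "[1..<n+1]", symmetric]
    by (simp add: coupon_pmf_def nn_integral_power_indep_sum_pmf map_map comp_def
        atLeastLessThanSuc_atLeastAtMost del: upt_Suc)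
  also have "\<dots> = (\<Prod>k=1..n. \<integral>\<^sup>+t. ennreal (s ^ t) \<partial>geom1_pmf (real k / real n))"
    by (subst (2) prod.atLeastAtMost_rev) (intro prod.cong refl, auto simp: of_nat_diff algebra_simps)
  also have "\<dots> = (\<Prod>k=1..n. ennreal (real k / (real k + real n * (1 / s - 1))))"
  proof (intro prod.cong refl)
    fix k assume k: "k \<in> {1..n}"
    then have k_pos: "0 < real k" "real k \<le> real n"
      by auto
    then have "0 < real k / real n" "real k / real n \<le> 1"
      by auto
    then have "(\<integral>\<^sup>+t. ennreal (s ^ t) \<partial>geom1_pmf (real k / real n))
        = ennreal (real k / real n * s / (1 - (1 - real k / real n) * s))"
      using s by (intro nn_integral_power_geom1_pmf) auto
    then show "(\<integral>\<^sup>+t. ennreal (s ^ t) \<partial>geom1_pmf (real k / real n))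
        = ennreal (real k / (real k + real n * (1 / s - 1)))"
      by (simp only: geometric_pgf_at_ratio[OF s k_pos])
  qed
  also have "\<dots> = ennreal (\<Prod>k=1..n. real k / (real k + real n * (1 / s - 1)))"
    using factor_nonneg by (simp add: prod_ennreal)
  finally show ?thesis
    using s factor_nonneg by (simp add: integral_eq_nn_integral prod_nonneg)
qed

lemma laplace_Z_eq_prod:
  assumes n: "0 < n" and l: "0 \<le> l"
  shows "laplace_Z l n
    = real n powr l * (\<Prod>k=1..n. real k / (real k + real n * (exp (l / real n) - 1)))"
proof -
  define s where "s = exp (- l / real n)"
  have s: "0 < s" "s \<le> 1" "1 / s = exp (l / real n)"
    using n l by (auto simp: s_def exp_minus field_simps)
  have "exp (- l * Z n t) = real n powr l * s ^ t" for t
  proof -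
    have "- l * Z n t = l * ln (real n) + real t * (- l / real n)"
      by (simp add: Z_def algebra_simps)
    then have "exp (- l * Z n t) = exp (l * ln (real n)) * s ^ t"
      by (simp only: s_def exp_add exp_of_nat_mult)
    then show ?thesis
      using n by (simp add: powr_def)
  qed
  then show ?thesis
    using s by (simp add: laplace_Z_def expectation_power_coupon_pmf)
qed

lemma prod_div_add_eq_fact_div_pochhammer:
  fixes z :: "'a :: field_char_0"
  shows "(\<Prod>k=1..n. of_nat k / (of_nat k + z)) = fact n / pochhammer (z + 1) n"
  by (simp add: prod_dividef fact_prod pochhammer_prod prod.atLeast1_atMost_eq lessThan_atLeast0 algebra_simps)

lemma LIMSEQ_powr_prod_div_add_Gamma:
  fixes z :: real
  shows "(\<lambda>n. real n powr z * (\<Prod>k=1..n. real k / (real k + z))) \<longlonglongrightarrow> Gamma (z + 1)"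
proof -
  have "\<forall>\<^sub>F n in sequentially. Gamma_series' (z + 1) n
      = real n powr z * (\<Prod>k=1..n. real k / (real k + z))"
    using eventually_gt_at_top[of "0::nat"]
  proof eventually_elim
    case (elim n)
    then have "fact n = real n * fact (n - 1)" and "exp ((z + 1) * ln (real n)) = real n powr z * real n"
      by (auto simp: fact_reduce powr_def exp_add algebra_simps)
    then show ?case
      unfolding prod_div_add_eq_fact_div_pochhammer by (simp add: Gamma_series'_def)
  qed
  with Gamma_series'_LIMSEQ show ?thesis
    by (rule Lim_transform_eventually)
qed

lemma Bseq_laplace_Z:
  assumes l: "0 \<le> l"
  shows "Bseq (\<lambda>n. laplace_Z l (Suc n))"
proof -
  let ?b = "\<lambda>n. real n powr l * (\<Prod>k=1..n. real k / (real k + l))"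
  have bound: "norm (laplace_Z l m) \<le> norm (?b m)" if m: "0 < m" for m
  proof -
    define a where "a = real m * (exp (l / real m) - 1)"
    have "l \<le> a"
      using m exp_ge_add_one_self[of "l / real m"] by (simp add: a_def field_simps)
    then have "(\<Prod>k=1..m. real k / (real k + a)) \<le> (\<Prod>k=1..m. real k / (real k + l))"
      using l by (intro prod_mono) (auto intro!: divide_left_mono add_pos_nonneg)
    moreover have "0 \<le> (\<Prod>k=1..m. real k / (real k + a))"
      using l \<open>l \<le> a\<close> by (intro prod_nonneg) auto
    ultimately show ?thesis
      using l m by (simp add: laplace_Z_eq_prod a_def prod_nonneg mult_left_mono)
  qed
  have "Bseq (\<lambda>n. ?b (Suc n))"
    using LIMSEQ_powr_prod_div_add_Gamma[of l] by (intro convergent_imp_Bseq convergentI LIMSEQ_Suc)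
  then show ?thesis
    by (rule Bseq_eventually_mono[rotated]) (intro always_eventually allI bound zero_less_Suc)
qed

lemma prod_div_add_eq_exp_sum_ln:
  fixes e :: real
  assumes "0 \<le> e"
  shows "(\<Prod>k=1..n. real k / (real k + 1 + e))
    = exp (- (\<Sum>k=1..n. ln (1 + e / (real k + 1)))) / (real n + 1)"
proof -
  have factor: "real k / (real k + 1 + e) = real k / (real k + 1) * exp (- ln (1 + e / (real k + 1)))"
    for k
  proof -
    have "0 < 1 + e / (real k + 1)"
      using assms by (simp add: add_pos_nonneg)
    then have "exp (- ln (1 + e / (real k + 1))) = (real k + 1) / (real k + 1 + e)"
      by (simp add: exp_minus field_simps)
    then show ?thesis
      by simp
  qed
  have telescope: "(\<Prod>k=1..n. real k / (real k + 1)) = 1 / (real n + 1)"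
    by (induction n) (simp_all add: prod.cl_ivl_Suc field_simps)
  show ?thesis
    unfolding factor prod.distrib telescope by (simp add: sum_negf[symmetric] exp_sum)
qed

lemma harm_Suc_le_ln_plus_one: "harm (Suc n) \<le> ln (real n + 1) + (1 :: real)"
proof -
  have "harm (Suc n) - ln (real (Suc n)) \<le> harm (Suc 0) - ln (real (Suc 0))"
    by (rule decseqD[OF decseq_harm_diff_ln]) simp
  then show ?thesis
    by (simp add: harm_expand(2) add_ac)
qed

lemma sum_ln_one_plus_div_bounds:
  fixes e :: real
  assumes e: "0 \<le> e" "e \<le> 1"
  shows "e * (ln (real n + 2) - 1) - real n * e\<^sup>2 \<le> (\<Sum>k=1..n. ln (1 + e / (real k + 1)))"
    and "(\<Sum>k=1..n. ln (1 + e / (real k + 1))) \<le> e * ln (real n + 1)"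
proof -
  have harm: "(\<Sum>k=1..n. e / (real k + 1)) = e * (harm (Suc n) - 1)"
    by (induction n) (simp_all add: harm_Suc harm_expand(1) sum.cl_ivl_Suc inverse_eq_divide algebra_simps)
  have "ln (real n + 2) \<le> harm (Suc n)"
    using ln_le_harm[of "Suc n"] by (simp add: add_ac)
  then have "e * (ln (real n + 2) - 1) - real n * e\<^sup>2 \<le> e * (harm (Suc n) - 1) - real n * e\<^sup>2"
    using e by (simp add: mult_left_mono)
  also have "\<dots> = (\<Sum>k=1..n. e / (real k + 1) - e\<^sup>2)"
    unfolding sum_subtractf harm by simp
  also have "\<dots> \<le> (\<Sum>k=1..n. ln (1 + e / (real k + 1)))"
  proof (intro sum_mono)
    fix k :: nat
    have term_bounds: "0 \<le> e / (real k + 1)" "e / (real k + 1) \<le> e"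
      using e by (auto simp: divide_le_eq algebra_simps)
    then have "e / (real k + 1) - e\<^sup>2 \<le> e / (real k + 1) - (e / (real k + 1))\<^sup>2"
      by (simp add: power_mono)
    also have "\<dots> \<le> ln (1 + e / (real k + 1))"
      using term_bounds e by (intro ln_one_plus_pos_lower_bound) auto
    finally show "e / (real k + 1) - e\<^sup>2 \<le> ln (1 + e / (real k + 1))" .
  qed
  finally show "e * (ln (real n + 2) - 1) - real n * e\<^sup>2 \<le> (\<Sum>k=1..n. ln (1 + e / (real k + 1)))" .
  have "(\<Sum>k=1..n. e / (real k + 1)) \<le> e * ln (real n + 1)"
    unfolding harm using e harm_Suc_le_ln_plus_one[of n] by (simp add: mult_left_mono)
  moreover have "(\<Sum>k=1..n. ln (1 + e / (real k + 1))) \<le> (\<Sum>k=1..n. e / (real k + 1))"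
    using e by (intro sum_mono ln_add_one_self_le_self) auto
  ultimately show "(\<Sum>k=1..n. ln (1 + e / (real k + 1))) \<le> e * ln (real n + 1)"
    by linarith
qed

lemma one_minus_exp_scaled_bounds:
  fixes N S :: real
  assumes "0 < N" "0 \<le> S"
  shows "S / (1 + S) \<le> 1 - N / (N + 1) * exp (- S)"
    and "1 - N / (N + 1) * exp (- S) \<le> 1 / (N + 1) + S"
proof -
  have split: "1 - N / (N + 1) * exp (- S) = exp (- S) / (N + 1) + (1 - exp (- S))"
    using assms by (simp add: field_simps)
  have "exp (- S) \<le> 1 / (1 + S)"
    using assms exp_ge_add_one_self[of S] by (simp add: exp_minus field_simps)
  then have "S / (1 + S) \<le> 1 - exp (- S)"
    using assms by (simp add: field_simps)
  then show "S / (1 + S) \<le> 1 - N / (N + 1) * exp (- S)"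
    using assms unfolding split by (simp add: add_increasing)
  have "1 - exp (- S) \<le> S"
    using exp_ge_add_one_self[of "- S"] by linarith
  moreover have "exp (- S) / (N + 1) \<le> 1 / (N + 1)"
    using assms by (simp add: divide_right_mono)
  ultimately show "1 - N / (N + 1) * exp (- S) \<le> 1 / (N + 1) + S"
    unfolding split by linarith
qed

definition coupon_eps :: "nat \<Rightarrow> real" where
  "coupon_eps n = real n * (exp (1 / real n) - 1) - 1"

definition coupon_log_sum :: "nat \<Rightarrow> real" where
  "coupon_log_sum n = (\<Sum>k=1..n. ln (1 + coupon_eps n / (real k + 1)))"

lemma coupon_eps_nonneg: "0 < n \<Longrightarrow> 0 \<le> coupon_eps n"
  using exp_ge_add_one_self[of "1 / real n"] by (simp add: coupon_eps_def field_simps)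

lemma laplace_Z_one_eq:
  assumes "0 < n"
  shows "laplace_Z 1 n = real n / (real n + 1) * exp (- coupon_log_sum n)"
proof -
  have "laplace_Z 1 n = real n * (\<Prod>k=1..n. real k / (real k + 1 + coupon_eps n))"
    using assms by (simp add: laplace_Z_eq_prod coupon_eps_def)
  then show ?thesis
    using prod_div_add_eq_exp_sum_ln[OF coupon_eps_nonneg[OF assms]] by (simp add: coupon_log_sum_def)
qed

lemma coupon_log_sum_asymp: "(\<lambda>n. coupon_log_sum n / (ln (real n) / (2 * real n))) \<longlonglongrightarrow> 1"
proof (rule tendsto_sandwich)
  let ?d = "\<lambda>n. ln (real n) / (2 * real n)"
  let ?L = "\<lambda>n. (coupon_eps n * (ln (real n + 2) - 1) - real n * (coupon_eps n)\<^sup>2) / ?d n"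
  let ?U = "\<lambda>n. coupon_eps n * ln (real n + 1) / ?d n"
  have "\<forall>\<^sub>F n in sequentially. 0 < n \<and> coupon_eps n \<le> 1 \<and> 0 < ?d n"
    unfolding coupon_eps_def by (intro eventually_conj; real_asymp)
  then have "\<forall>\<^sub>F n in sequentially. ?L n \<le> coupon_log_sum n / ?d n \<and> coupon_log_sum n / ?d n \<le> ?U n"
    by eventually_elim
      (use sum_ln_one_plus_div_bounds[OF coupon_eps_nonneg] in \<open>auto simp: coupon_log_sum_def divide_right_mono\<close>)
  then show "\<forall>\<^sub>F n in sequentially. ?L n \<le> coupon_log_sum n / ?d n"
    and "\<forall>\<^sub>F n in sequentially. coupon_log_sum n / ?d n \<le> ?U n"
    by (auto elim: eventually_mono)
  show "?L \<longlonglongrightarrow> 1" "?U \<longlonglongrightarrow> 1"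
    unfolding coupon_eps_def by real_asymp+
qed

lemma coupon_log_sum_nonneg: "0 < n \<Longrightarrow> 0 \<le> coupon_log_sum n"
  unfolding coupon_log_sum_def using coupon_eps_nonneg by (intro sum_nonneg) simp

lemma one_minus_laplace_Z_one_bounds:
  assumes "0 < n"
  shows "coupon_log_sum n / (1 + coupon_log_sum n) \<le> 1 - laplace_Z 1 n"
    and "1 - laplace_Z 1 n \<le> 1 / (real n + 1) + coupon_log_sum n"
  using assms one_minus_exp_scaled_bounds[of "real n" "coupon_log_sum n"]
  by (simp_all add: laplace_Z_one_eq coupon_log_sum_nonneg)

lemma laplace_Z_one_asymp:
  "(\<lambda>n. (laplace_Z 1 n - 1) / (- ln (real n) / (2 * real n))) \<longlonglongrightarrow> 1"
proof -
  define d where "d = (\<lambda>n. ln (real n) / (2 * real n))"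
  define q where "q = (\<lambda>n. coupon_log_sum n / d n)"
  have q: "q \<longlonglongrightarrow> 1"
    unfolding q_def d_def by (rule coupon_log_sum_asymp)
  have d_pos: "\<forall>\<^sub>F n in sequentially. 0 < n \<and> 0 < d n"
    unfolding d_def by (intro eventually_conj; real_asymp)
  have "d \<longlonglongrightarrow> 0"
    unfolding d_def by real_asymp
  with q have "(\<lambda>n. q n * d n) \<longlonglongrightarrow> 0"
    using tendsto_mult by fastforce
  moreover have "\<forall>\<^sub>F n in sequentially. q n * d n = coupon_log_sum n"
    using d_pos by eventually_elim (simp add: q_def)
  ultimately have S: "coupon_log_sum \<longlonglongrightarrow> 0"
    by (rule Lim_transform_eventually)
  have "(\<lambda>n. (1 - laplace_Z 1 n) / d n) \<longlonglongrightarrow> 1"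
  proof (rule tendsto_sandwich)
    show "\<forall>\<^sub>F n in sequentially. q n / (1 + coupon_log_sum n) \<le> (1 - laplace_Z 1 n) / d n"
      using d_pos
    proof eventually_elim
      case (elim n)
      then have "q n / (1 + coupon_log_sum n) = coupon_log_sum n / (1 + coupon_log_sum n) / d n"
        using coupon_log_sum_nonneg[of n] by (simp add: q_def field_simps)
      also have "\<dots> \<le> (1 - laplace_Z 1 n) / d n"
        using elim by (intro divide_right_mono one_minus_laplace_Z_one_bounds) auto
      finally show ?case .
    qed
    show "\<forall>\<^sub>F n in sequentially. (1 - laplace_Z 1 n) / d n \<le> 1 / ((real n + 1) * d n) + q n"
      using d_pos
    proof eventually_elim
      case (elim n)
      then have "(1 - laplace_Z 1 n) / d n \<le> (1 / (real n + 1) + coupon_log_sum n) / d n"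
        by (intro divide_right_mono one_minus_laplace_Z_one_bounds) auto
      then show ?case
        by (simp add: q_def add_divide_distrib)
    qed
    show "(\<lambda>n. q n / (1 + coupon_log_sum n)) \<longlonglongrightarrow> 1"
      using tendsto_divide[OF q tendsto_add[OF tendsto_const S, of 1]] by simp
    have "(\<lambda>n. 1 / ((real n + 1) * d n)) \<longlonglongrightarrow> 0"
      unfolding d_def by real_asymp
    then show "(\<lambda>n. 1 / ((real n + 1) * d n) + q n) \<longlonglongrightarrow> 1"
      using tendsto_add[OF _ q] by fastforce
  qed
  moreover have "(1 - x) / (y / z) = (x - 1) / (- y / z)" for x y z :: real
    by (metis divide_minus_left divide_minus_right minus_diff_eq)
  ultimately show ?thesis
    by (simp add: d_def)
qed

theorem lemma4p4:
  shows "(\<forall>l::real. l \<ge> 0 \<longrightarrow> Bseq (\<lambda>n. laplace_Z l (Suc n)))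
    \<and> ((\<lambda>n. (laplace_Z 1 n - 1) / (- ln (real n) / (2 * real n))) \<longlonglongrightarrow> 1)"
  using Bseq_laplace_Z laplace_Z_one_asymp by blast

end
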